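(* Let $q$ and $d$ be positive integers. Suppose a box $B$ of height $h$ contains a packing of rectangles, each of width $1$ and height at least $h/d$, and such that the rectangles have at most $q$ distinct heights. Then there is a packing of all these rectangles into at most $d(q+1)^d$ vertical containers packed inside $B$, such that the total area of the containers equals the total area of the rectangles. Symmetrically, if a box $B$ of width $w$ contains a packing of rectangles, each of height $1$ and width at least $w/d$, with at most $q$ distinct widths, then all of them can be packed into at most $d(q+1)^d$ horizontal containers packed inside $B$ whose total area equals the total area of the rectangles.
   Context: A box is an axis-aligned rectangular region; rectangles are packed axis-parallel, without rotation, with pairwise disjoint interiors and integer coordinates. A vertical container is an axis-aligned rectangular region in which rectangles are packed one next to the other from left to right, so that every vertical line meets at most one packed rectangle; a horizontal container is one in which rectangles are packed one on top of the other from bottom to top, so that every horizontal line meets at most one packed rectangle. *)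

theory Defs
  imports Main
begin

text \<open>A box (axis-aligned rectangular region with integer coordinates) is encoded as
  (x, y, w, h): lower-left corner (x, y), width w, height h.
  Its region is [x, x+w] \<times> [y, y+h].\<close>

type_synonym box = "int \<times> int \<times> nat \<times> nat"

definition bx :: "box \<Rightarrow> int" where "bx b = fst b"
definition by' :: "box \<Rightarrow> int" where "by' b = fst (snd b)"
definition bw :: "box \<Rightarrow> nat" where "bw b = fst (snd (snd b))"
definition bh :: "box \<Rightarrow> nat" where "bh b = snd (snd (snd b))"

definition area :: "box \<Rightarrow> nat" where "area b = bw b * bh b"

definition open_overlap :: "int \<Rightarrow> nat \<Rightarrow> int \<Rightarrow> nat \<Rightarrow> bool" where
  "open_overlap a l c k \<longleftrightarrow> a < c + int k \<and> c < a + int l"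

definition inside :: "box \<Rightarrow> box \<Rightarrow> bool" where
  "inside b1 b2 \<longleftrightarrow> bx b2 \<le> bx b1 \<and> bx b1 + int (bw b1) \<le> bx b2 + int (bw b2)
     \<and> by' b2 \<le> by' b1 \<and> by' b1 + int (bh b1) \<le> by' b2 + int (bh b2)"

definition interiors_disjoint :: "box \<Rightarrow> box \<Rightarrow> bool" where
  "interiors_disjoint b1 b2 \<longleftrightarrow>
     \<not> (open_overlap (bx b1) (bw b1) (bx b2) (bw b2) \<and> open_overlap (by' b1) (bh b1) (by' b2) (bh b2))"

definition packing :: "box \<Rightarrow> 'i set \<Rightarrow> ('i \<Rightarrow> box) \<Rightarrow> bool" where
  "packing B I P \<longleftrightarrow> (\<forall>i\<in>I. 0 < bw (P i) \<and> 0 < bh (P i) \<and> inside (P i) B) \<and>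
     (\<forall>i\<in>I. \<forall>j\<in>I. i \<noteq> j \<longrightarrow> interiors_disjoint (P i) (P j))"

definition containers_packed :: "box \<Rightarrow> nat \<Rightarrow> (nat \<Rightarrow> box) \<Rightarrow> bool" where
  "containers_packed B m C \<longleftrightarrow> (\<forall>k<m. inside (C k) B) \<and>
     (\<forall>k<m. \<forall>l<m. k \<noteq> l \<longrightarrow> interiors_disjoint (C k) (C l))"

text \<open>Rectangles of I are repacked by P' (same sizes as in P, no rotation), rectangle i
  into container C (f i) with f i < m, each container being vertical: every vertical line
  meets at most one rectangle of the container (open x-projections pairwise disjoint).\<close>
definition vertical_container_packing ::
  "'i set \<Rightarrow> ('i \<Rightarrow> box) \<Rightarrow> nat \<Rightarrow> (nat \<Rightarrow> box) \<Rightarrow> ('i \<Rightarrow> nat) \<Rightarrow> ('i \<Rightarrow> box) \<Rightarrow> bool" where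
  "vertical_container_packing I P m C f P' \<longleftrightarrow>
     (\<forall>i\<in>I. f i < m \<and> bw (P' i) = bw (P i) \<and> bh (P' i) = bh (P i) \<and> inside (P' i) (C (f i))) \<and>
     (\<forall>i\<in>I. \<forall>j\<in>I. i \<noteq> j \<and> f i = f j \<longrightarrow>
        \<not> open_overlap (bx (P' i)) (bw (P' i)) (bx (P' j)) (bw (P' j)))"

definition horizontal_container_packing ::
  "'i set \<Rightarrow> ('i \<Rightarrow> box) \<Rightarrow> nat \<Rightarrow> (nat \<Rightarrow> box) \<Rightarrow> ('i \<Rightarrow> nat) \<Rightarrow> ('i \<Rightarrow> box) \<Rightarrow> bool" where
  "horizontal_container_packing I P m C f P' \<longleftrightarrow>
     (\<forall>i\<in>I. f i < m \<and> bw (P' i) = bw (P i) \<and> bh (P' i) = bh (P i) \<and> inside (P' i) (C (f i))) \<and>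
     (\<forall>i\<in>I. \<forall>j\<in>I. i \<noteq> j \<and> f i = f j \<longrightarrow>
        \<not> open_overlap (by' (P' i)) (bh (P' i)) (by' (P' j)) (bh (P' j)))"

end

theory Submission
  imports Defs
begin

(* Each rectangle is taller than h/d, so a unit-width column of B holds at most d of them,
   of total height at most h. The type of a column is the list of heights of its rectangles,
   padded with zeros to length d; there are at most (q+1)^d types. Permute the columns so that
   columns of equal type become adjacent, and restack every column from the bottom in the order
   of its type: then the j-th rectangles of all columns of one type fill exactly one vertical
   container, which gives d containers per type and no wasted area. The horizontal case is the
   vertical one after transposing the plane. *)

lemma sum_lengths_le_if_disjoint_subintervals:
  fixes a :: "'i \<Rightarrow> int" and l :: "'i \<Rightarrow> nat"
  assumes "finite S"
    and "\<And>i. i \<in> S \<Longrightarrow> 0 < l i \<and> lo \<le> a i \<and> a i + int (l i) \<le> hi"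
    and "\<And>i j. i \<in> S \<Longrightarrow> j \<in> S \<Longrightarrow> i \<noteq> j \<Longrightarrow> \<not> open_overlap (a i) (l i) (a j) (l j)"
    and "lo \<le> hi"
  shows "int (sum l S) \<le> hi - lo"
  using assms
proof (induction S arbitrary: hi rule: finite_psubset_induct)
  case (psubset S)
  show ?case
  proof (cases "S = {}")
    case True
    then show ?thesis using psubset.prems(3) by simp
  next
    case False
    have "Max (a ` S) \<in> a ` S" using psubset.hyps(1) False by simp
    then obtain i where i: "i \<in> S" "a i = Max (a ` S)" by auto
    have lower: "a j + int (l j) \<le> a i" if "j \<in> S - {i}" for j
    proof -
      have "a j \<le> a i" using i psubset.hyps(1) that by simp
      moreover have "\<not> open_overlap (a j) (l j) (a i) (l i)" "0 < l i"
        using psubset.prems(1,2) that i(1) by auto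
      ultimately show ?thesis unfolding open_overlap_def by linarith
    qed
    have "int (sum l (S - {i})) \<le> a i - lo"
      by (rule psubset.IH) (use i(1) lower psubset.prems(1,2) in auto)
    moreover have "sum l S = l i + sum l (S - {i})"
      using i(1) psubset.hyps(1) by (simp add: sum.remove)
    ultimately show ?thesis using psubset.prems(1) i(1) by fastforce
  qed
qed

lemma sum_list_take_add_nth_le:
  fixes xs :: "nat list"
  assumes "j < j'" and "j < length xs"
  shows "sum_list (take j xs) + xs ! j \<le> sum_list (take j' xs)"
proof -
  have "sum_list (take j xs) + xs ! j = sum_list (take (Suc j) xs)"
    using assms(2) by (simp add: take_Suc_conv_app_nth)
  also have "\<dots> \<le> sum_list (take (Suc j) xs @ take (j' - Suc j) (drop (Suc j) xs))"
    by simp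
  also have "\<dots> = sum_list (take j' xs)"
    using take_add[of "Suc j" "j' - Suc j" xs] assms(1) by simp
  finally show ?thesis .
qed

lemma sum_list_take_add_nth_le_sum_list:
  fixes xs :: "nat list"
  assumes "j < length xs"
  shows "sum_list (take j xs) + xs ! j \<le> sum_list xs"
  using sum_list_take_add_nth_le[OF assms assms] by simp

lemma interiors_disjoint_sym: "interiors_disjoint a b \<longleftrightarrow> interiors_disjoint b a"
  unfolding interiors_disjoint_def open_overlap_def by auto

lemma interiors_disjoint_if_left_of:
  "bx a + int (bw a) \<le> bx b \<Longrightarrow> interiors_disjoint a b"
  unfolding interiors_disjoint_def open_overlap_def by auto

lemma interiors_disjoint_if_below:
  "by' a + int (bh a) \<le> by' b \<Longrightarrow> interiors_disjoint a b"
  unfolding interiors_disjoint_def open_overlap_def by auto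

lemma sum_lessThan_mult_split:
  fixes g :: "nat \<Rightarrow> 'a::comm_monoid_add"
  shows "(\<Sum>n<K * d. g n) = (\<Sum>k<K. \<Sum>j<d. g (k * d + j))"
proof -
  have "(\<Sum>n = k * d..<k * d + d. g n) = (\<Sum>j<d. g (k * d + j))" for k
    using sum.shift_bounds_nat_ivl[of g 0 "k * d" d] by (simp add: atLeast0LessThan add.commute)
  then show ?thesis using sum.nat_group[of g d K] by simp
qed

definition block_start :: "(nat \<Rightarrow> 'k::linorder) \<Rightarrow> nat \<Rightarrow> 'k \<Rightarrow> nat" where
  "block_start key n k = card {c \<in> {..<n}. key c < k}"

definition block_size :: "(nat \<Rightarrow> 'k) \<Rightarrow> nat \<Rightarrow> 'k \<Rightarrow> nat" where
  "block_size key n k = card {c \<in> {..<n}. key c = k}"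

text \<open>The position of \<open>c\<close> after stably sorting \<open>0, \<dots>, n - 1\<close> by \<open>key\<close>.\<close>
definition sorted_position :: "(nat \<Rightarrow> 'k::linorder) \<Rightarrow> nat \<Rightarrow> nat \<Rightarrow> nat" where
  "sorted_position key n c = block_start key n (key c) + card {c' \<in> {..<c}. key c' = key c}"

lemma block_start_add_size_eq:
  "block_start key n k + block_size key n k = card {c \<in> {..<n}. key c \<le> k}"
proof -
  have "{c \<in> {..<n}. key c \<le> k} = {c \<in> {..<n}. key c < k} \<union> {c \<in> {..<n}. key c = k}"
    by auto
  moreover have "card ({c \<in> {..<n}. key c < k} \<union> {c \<in> {..<n}. key c = k})
      = card {c \<in> {..<n}. key c < k} + card {c \<in> {..<n}. key c = k}"
    by (rule card_Un_disjoint) auto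
  ultimately show ?thesis
    unfolding block_start_def block_size_def by simp
qed

lemma block_end_le_block_start:
  assumes "k < k'"
  shows "block_start key n k + block_size key n k \<le> block_start key n k'"
proof -
  have "card {c \<in> {..<n}. key c \<le> k} \<le> card {c \<in> {..<n}. key c < k'}"
    using assms by (intro card_mono) auto
  then show ?thesis unfolding block_start_add_size_eq by (simp add: block_start_def)
qed

lemma block_end_le: "block_start key n k + block_size key n k \<le> n"
proof -
  have "card {c \<in> {..<n}. key c \<le> k} \<le> card {..<n}"
    by (intro card_mono) auto
  then show ?thesis unfolding block_start_add_size_eq by simp
qed

lemma sorted_position_in_block:
  assumes "c < n"
  shows "block_start key n (key c) \<le> sorted_position key n c"
    and "sorted_position key n c < block_start key n (key c) + block_size key n (key c)"
proof -
  show "block_start key n (key c) \<le> sorted_position key n c"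
    unfolding sorted_position_def by simp
  have "{c' \<in> {..<c}. key c' = key c} \<subset> {c' \<in> {..<n}. key c' = key c}"
    using assms by auto
  then have "card {c' \<in> {..<c}. key c' = key c} < block_size key n (key c)"
    unfolding block_size_def by (simp add: psubset_card_mono)
  then show "sorted_position key n c < block_start key n (key c) + block_size key n (key c)"
    unfolding sorted_position_def by simp
qed

lemma sorted_position_strict_mono_on_block:
  assumes "c < c'" and "key c = key c'"
  shows "sorted_position key n c < sorted_position key n c'"
proof -
  have "{c'' \<in> {..<c}. key c'' = key c} \<subset> {c'' \<in> {..<c'}. key c'' = key c'}"
    using assms by auto
  then show ?thesis
    unfolding sorted_position_def using assms(2) by (simp add: psubset_card_mono)
qed

lemma sorted_position_inj_on_block:
  "key c = key c' \<Longrightarrow> sorted_position key n c = sorted_position key n c' \<Longrightarrow> c = c'"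
  using sorted_position_strict_mono_on_block[of c c' key n]
    sorted_position_strict_mono_on_block[of c' c key n]
  by (metis less_irrefl linorder_neqE_nat)

text \<open>After sorting the columns stably by \<open>key\<close>,
  the columns of type \<open>k\<close> form one block, and container \<open>k * d + j\<close> spans that block with the
  \<open>j\<close>-th entry of \<open>E k\<close> as height, the entries of \<open>E k\<close> being stacked from the bottom of \<open>B\<close>.\<close>

locale typed_columns =
  fixes B :: box and d :: nat and I :: "'i set" and hgt :: "'i \<Rightarrow> nat" and col :: "'i \<Rightarrow> nat"
    and L :: "nat \<Rightarrow> 'i list" and K :: nat and E :: "nat \<Rightarrow> nat list" and key :: "nat \<Rightarrow> nat"
  assumes col_less: "i \<in> I \<Longrightarrow> col i < bw B"
    and set_L: "set (L c) = {i \<in> I. col i = c}"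
    and distinct_L: "distinct (L c)"
    and key_less: "c < bw B \<Longrightarrow> key c < K"
    and E_key: "c < bw B \<Longrightarrow> E (key c) = map hgt (L c) @ replicate (d - length (L c)) 0"
    and length_E: "k < K \<Longrightarrow> length (E k) = d"
    and sum_list_E_le: "k < K \<Longrightarrow> sum_list (E k) \<le> bh B"
begin

definition slot :: "'i \<Rightarrow> nat" where
  "slot i = (THE j. j < length (L (col i)) \<and> L (col i) ! j = i)"

definition container :: "nat \<Rightarrow> nat \<Rightarrow> box" where
  "container k j = (bx B + int (block_start key (bw B) k), by' B + int (sum_list (take j (E k))),
     block_size key (bw B) k, E k ! j)"

definition containers :: "nat \<Rightarrow> box" where
  "containers n = container (n div d) (n mod d)"

definition assignment :: "'i \<Rightarrow> nat" where
  "assignment i = key (col i) * d + slot i"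

definition placement :: "'i \<Rightarrow> box" where
  "placement i = (bx B + int (sorted_position key (bw B) (col i)),
     by' B + int (sum_list (take (slot i) (E (key (col i))))), 1, hgt i)"

lemma container_sel:
  "bx (container k j) = bx B + int (block_start key (bw B) k)"
  "by' (container k j) = by' B + int (sum_list (take j (E k)))"
  "bw (container k j) = block_size key (bw B) k"
  "bh (container k j) = E k ! j"
  by (simp_all add: container_def bx_def by'_def bw_def bh_def)

lemma placement_sel:
  "bx (placement i) = bx B + int (sorted_position key (bw B) (col i))"
  "by' (placement i) = by' B + int (sum_list (take (slot i) (E (key (col i)))))"
  "bw (placement i) = 1"
  "bh (placement i) = hgt i"
  by (simp_all add: placement_def bx_def by'_def bw_def bh_def)

lemma finite_I: "finite I"
proof (rule finite_subset)
  show "I \<subseteq> (\<Union>c<bw B. set (L c))" using col_less set_L by auto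
qed simp

lemma slot: "i \<in> I \<Longrightarrow> slot i < length (L (col i)) \<and> L (col i) ! slot i = i"
  unfolding slot_def by (rule theI') (use distinct_Ex1[OF distinct_L] set_L in auto)

lemma length_L_le: "c < bw B \<Longrightarrow> length (L c) \<le> d"
  using length_E[OF key_less] E_key by fastforce

lemma slot_less: "i \<in> I \<Longrightarrow> slot i < d"
  using slot length_L_le col_less by (meson order_less_le_trans)

lemma E_key_slot: "i \<in> I \<Longrightarrow> E (key (col i)) ! slot i = hgt i"
  using slot[of i] E_key[OF col_less] by (simp add: nth_append)

lemma containers_eq: "j < d \<Longrightarrow> containers (k * d + j) = container k j"
  unfolding containers_def by simp

lemma container_inside:
  assumes "k < K" and "j < d"
  shows "inside (container k j) B"
proof -
  have "sum_list (take j (E k)) + E k ! j \<le> bh B"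
    using sum_list_take_add_nth_le_sum_list[of j "E k"] sum_list_E_le[OF assms(1)]
      length_E[OF assms(1)] assms(2) by simp
  then show ?thesis
    unfolding inside_def container_sel using block_end_le[of key "bw B" k] by simp
qed

lemma containers_disjoint_if_less:
  assumes "n < n'" and "n' < K * d"
  shows "interiors_disjoint (containers n) (containers n')"
proof -
  have "0 < d" using assms(2) by (cases d) auto
  have "n div d \<le> n' div d" using assms(1) by (simp add: div_le_mono)
  moreover have "n mod d < n' mod d" if "n div d = n' div d"
    using assms(1) that by (metis div_mult_mod_eq nat_add_left_cancel_less)
  ultimately consider "n div d < n' div d" | "n div d = n' div d" "n mod d < n' mod d"
    by fastforce
  then show ?thesis
  proof cases
    case 1
    then show ?thesis
      unfolding containers_def using block_end_le_block_start[OF 1, of key "bw B"]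
      by (intro interiors_disjoint_if_left_of) (simp add: container_sel)
  next
    case 2
    have "n' div d < K" using assms(2) by (simp add: less_mult_imp_div_less)
    then have "length (E (n div d)) = d" using 2(1) length_E by simp
    then have "sum_list (take (n mod d) (E (n div d))) + E (n div d) ! (n mod d)
        \<le> sum_list (take (n' mod d) (E (n div d)))"
      using 2(2) \<open>0 < d\<close> by (intro sum_list_take_add_nth_le) simp_all
    then show ?thesis
      unfolding containers_def using 2(1)
      by (intro interiors_disjoint_if_below) (simp add: container_sel)
  qed
qed

lemma containers_packed: "containers_packed B (K * d) containers"
  unfolding containers_packed_def
proof (intro conjI allI impI)
  fix n assume "n < K * d"
  then have "n div d < K" "n mod d < d"
    by (simp_all add: less_mult_imp_div_less) (cases d; simp)
  then show "inside (containers n) B"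
    unfolding containers_def by (rule container_inside)
next
  fix n n' assume "n < K * d" "n' < K * d" "n \<noteq> n'"
  then show "interiors_disjoint (containers n) (containers n')"
    using containers_disjoint_if_less interiors_disjoint_sym
    by (metis linorder_neqE_nat)
qed

lemma assignment_div_mod:
  assumes "i \<in> I"
  shows "assignment i div d = key (col i)" and "assignment i mod d = slot i"
  using slot_less[OF assms] unfolding assignment_def by simp_all

lemma vertical_container_packing_placement:
  assumes "\<forall>i\<in>I. bw (P i) = 1 \<and> bh (P i) = hgt i"
  shows "vertical_container_packing I P (K * d) containers assignment placement"
  unfolding vertical_container_packing_def
proof (intro conjI ballI impI)
  fix i assume i: "i \<in> I"
  have "assignment i < Suc (key (col i)) * d"
    unfolding assignment_def using slot_less[OF i] by simp
  also have "\<dots> \<le> K * d"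
    using key_less[OF col_less[OF i]] by (intro mult_le_mono1) simp
  finally show "assignment i < K * d" .
  show "bw (placement i) = bw (P i)" "bh (placement i) = bh (P i)"
    using assms i by (simp_all add: placement_sel)
  have "containers (assignment i) = container (key (col i)) (slot i)"
    unfolding assignment_def using slot_less[OF i] by (simp add: containers_eq)
  then show "inside (placement i) (containers (assignment i))"
    unfolding inside_def using sorted_position_in_block[OF col_less[OF i], of key]
    by (simp add: container_sel placement_sel E_key_slot[OF i])
next
  fix i j assume ij: "i \<in> I" "j \<in> I" "i \<noteq> j \<and> assignment i = assignment j"
  then have same_key: "key (col i) = key (col j)" and "slot i = slot j"
    using assignment_div_mod by metis+
  then have "col i \<noteq> col j" using slot ij by metis
  then have "sorted_position key (bw B) (col i) \<noteq> sorted_position key (bw B) (col j)"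
    using sorted_position_inj_on_block[of key "col i" "col j"] same_key by blast
  then show "\<not> open_overlap (bx (placement i)) (bw (placement i)) (bx (placement j)) (bw (placement j))"
    unfolding open_overlap_def placement_sel by linarith
qed

lemma sum_area_containers: "(\<Sum>n<K * d. area (containers n)) = (\<Sum>i\<in>I. hgt i)"
proof -
  have "(\<Sum>n<K * d. area (containers n)) = (\<Sum>k<K. \<Sum>j<d. area (container k j))"
    unfolding sum_lessThan_mult_split by (simp add: containers_eq)
  also have "\<dots> = (\<Sum>k<K. block_size key (bw B) k * sum_list (E k))"
    by (rule sum.cong[OF refl])
      (simp add: area_def container_sel length_E sum_list_sum_nth atLeast0LessThan sum_distrib_left)
  also have "\<dots> = (\<Sum>k<K. \<Sum>c\<in>{c \<in> {..<bw B}. key c = k}. sum_list (E (key c)))"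
    unfolding block_size_def by (rule sum.cong) simp_all
  also have "\<dots> = (\<Sum>c<bw B. sum_list (E (key c)))"
    by (rule sum.group) (use key_less in auto)
  also have "\<dots> = (\<Sum>c<bw B. \<Sum>i\<in>{i \<in> I. col i = c}. hgt i)"
    using distinct_L set_L by (intro sum.cong) (simp_all add: E_key sum_list_distinct_conv_sum_set)
  also have "\<dots> = (\<Sum>i\<in>I. hgt i)"
    by (rule sum.group) (use finite_I col_less in auto)
  finally show ?thesis .
qed

end

lemma card_le_lists_length_eq:
  assumes "finite H" and "card H \<le> q" and "A \<subseteq> {xs. set xs \<subseteq> insert z H \<and> length xs = d}"
  shows "card A \<le> (q + 1) ^ d"
proof -
  have "card A \<le> card {xs. set xs \<subseteq> insert z H \<and> length xs = d}"
    using assms(1,3) by (intro card_mono) (simp_all add: finite_lists_length_eq)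
  also have "\<dots> = card (insert z H) ^ d"
    using assms(1) by (simp add: card_lists_length_eq)
  also have "\<dots> \<le> (q + 1) ^ d"
    using assms(1,2) card_insert_le_m1[of "q + 1" H z] by (intro power_mono) (simp_all add: card_insert_if)
  finally show ?thesis .
qed

lemma packing_column_height_le:
  assumes "packing B I P" and "finite I" and "\<forall>i\<in>I. bw (P i) = 1"
  shows "(\<Sum>i\<in>{i \<in> I. bx (P i) = x}. bh (P i)) \<le> bh B"
proof -
  have "int (\<Sum>i\<in>{i \<in> I. bx (P i) = x}. bh (P i)) \<le> (by' B + int (bh B)) - by' B"
  proof (rule sum_lengths_le_if_disjoint_subintervals)
    fix i j assume "i \<in> {i \<in> I. bx (P i) = x}" "j \<in> {i \<in> I. bx (P i) = x}" "i \<noteq> j"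
    then show "\<not> open_overlap (by' (P i)) (bh (P i)) (by' (P j)) (bh (P j))"
      using assms(1,3) unfolding packing_def interiors_disjoint_def open_overlap_def by auto
  qed (use assms(1,2) in \<open>auto simp: packing_def inside_def\<close>)
  then show ?thesis by (metis add_diff_cancel_left' of_nat_le_iff)
qed

lemma packing_column_card_le:
  assumes "packing B I P" and "finite I" and "\<forall>i\<in>I. bw (P i) = 1 \<and> bh B \<le> d * bh (P i)"
  shows "card {i \<in> I. bx (P i) = x} \<le> d"
proof (cases "{i \<in> I. bx (P i) = x} = {}")
  case False
  then obtain i where "i \<in> I" by auto
  then have "0 < bh B"
    using assms(1) unfolding packing_def inside_def by fastforce
  have "card {i \<in> I. bx (P i) = x} * bh B \<le> (\<Sum>i\<in>{i \<in> I. bx (P i) = x}. d * bh (P i))"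
    using sum_bounded_below[of "{i \<in> I. bx (P i) = x}" "bh B" "\<lambda>i. d * bh (P i)"] assms(3)
    by auto
  also have "\<dots> \<le> d * bh B"
    using packing_column_height_le[OF assms(1,2)] assms(3) by (simp add: sum_distrib_left[symmetric])
  finally show ?thesis using \<open>0 < bh B\<close> by simp
next
  case True
  then show ?thesis by (subst True) simp
qed

lemma packing_into_vertical_containers:
  assumes "finite I" and pk: "packing B I P"
    and unit_width: "\<forall>i\<in>I. bw (P i) = 1 \<and> bh B \<le> d * bh (P i)"
    and "card ((\<lambda>i. bh (P i)) ` I) \<le> q"
  shows "\<exists>m C f P'. m \<le> d * (q + 1) ^ d \<and> containers_packed B m C \<and>
           vertical_container_packing I P m C f P' \<and>
           (\<Sum>k<m. area (C k)) = (\<Sum>i\<in>I. area (P i))"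
proof -
  define col where "col i = nat (bx (P i) - bx B)" for i
  define L where "L c = (SOME xs. set xs = {i \<in> I. col i = c} \<and> distinct xs)" for c
  define profile where
    "profile c = map (\<lambda>i. bh (P i)) (L c) @ replicate (d - length (L c)) 0" for c
  define K where "K = card (profile ` {..<bw B})"
  obtain E where E: "bij_betw E {..<K} (profile ` {..<bw B})"
    using ex_bij_betw_nat_finite[of "profile ` {..<bw B}"] unfolding K_def atLeast0LessThan by auto
  define key where "key c = inv_into {..<K} E (profile c)" for c
  have col: "col i < bw B" "bx (P i) = bx B + int (col i)" if "i \<in> I" for i
    using pk unit_width that unfolding packing_def inside_def col_def by auto
  have L: "set (L c) = {i \<in> I. col i = c} \<and> distinct (L c)" for c
  proof -
    have "finite {i \<in> I. col i = c}" using \<open>finite I\<close> by simp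
    then show ?thesis unfolding L_def by (rule someI_ex[OF finite_distinct_list])
  qed
  have column: "{i \<in> I. col i = c} = {i \<in> I. bx (P i) = bx B + int c}" for c
  proof -
    have "col i = c \<longleftrightarrow> bx (P i) = bx B + int c" if "i \<in> I" for i
      using col(2)[OF that] by auto
    then show ?thesis by blast
  qed
  have profile: "length (profile c) = d \<and> sum_list (profile c) \<le> bh B" for c
  proof -
    have "length (L c) \<le> d"
      using packing_column_card_le[OF pk \<open>finite I\<close> unit_width] L[of c] column[of c]
      by (metis distinct_card)
    moreover have "sum_list (map (\<lambda>i. bh (P i)) (L c)) \<le> bh B"
      using packing_column_height_le[OF pk \<open>finite I\<close>] unit_width L[of c] column[of c]
      by (simp add: sum_list_distinct_conv_sum_set)
    ultimately show ?thesis unfolding profile_def by (simp add: sum_list_replicate)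
  qed
  have key: "key c < K \<and> E (key c) = profile c" if "c < bw B" for c
  proof -
    have "profile c \<in> E ` {..<K}" using E that by (auto simp: bij_betw_def)
    then have "inv_into {..<K} E (profile c) \<in> {..<K}" "E (inv_into {..<K} E (profile c)) = profile c"
      by (rule inv_into_into, rule f_inv_into_f)
    then show ?thesis unfolding key_def by simp
  qed
  have type: "length (E k) = d \<and> sum_list (E k) \<le> bh B" if k: "k < K" for k
  proof -
    obtain c where "E k = profile c" using E k unfolding bij_betw_def by auto
    then show ?thesis using profile by simp
  qed
  interpret typed_columns B d I "\<lambda>i. bh (P i)" col L K E key
    by unfold_locales (use col L key type in \<open>simp_all add: profile_def\<close>)
  have "K \<le> (q + 1) ^ d"
    unfolding K_def
  proof (rule card_le_lists_length_eq[where H = "(\<lambda>i. bh (P i)) ` I" and z = 0])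
    show "profile ` {..<bw B} \<subseteq> {xs. set xs \<subseteq> insert 0 ((\<lambda>i. bh (P i)) ` I) \<and> length xs = d}"
      using profile L unfolding profile_def by auto
  qed (use assms(1,4) in simp_all)
  moreover have "(\<Sum>i\<in>I. area (P i)) = (\<Sum>i\<in>I. bh (P i))"
    using unit_width by (simp add: area_def)
  ultimately show ?thesis
    using containers_packed vertical_container_packing_placement[of P] sum_area_containers unit_width
    by (intro exI[of _ "K * d"] exI[of _ containers] exI[of _ assignment] exI[of _ placement])
      (simp add: mult.commute)
qed

definition transpose_box :: "box \<Rightarrow> box" where
  "transpose_box b = (by' b, bx b, bh b, bw b)"

lemma transpose_box_sel [simp]:
  "bx (transpose_box b) = by' b" "by' (transpose_box b) = bx b"
  "bw (transpose_box b) = bh b" "bh (transpose_box b) = bw b"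
  by (simp_all add: transpose_box_def bx_def by'_def bw_def bh_def)

lemma transpose_box_transpose_box [simp]: "transpose_box (transpose_box b) = b"
  by (cases b) (simp add: transpose_box_def bx_def by'_def bw_def bh_def)

lemma inside_transpose_box [simp]: "inside (transpose_box a) (transpose_box b) \<longleftrightarrow> inside a b"
  unfolding inside_def by auto

lemma interiors_disjoint_transpose_box [simp]:
  "interiors_disjoint (transpose_box a) (transpose_box b) \<longleftrightarrow> interiors_disjoint a b"
  unfolding interiors_disjoint_def by auto

lemma area_transpose_box [simp]: "area (transpose_box b) = area b"
  unfolding area_def by simp

lemma packing_transpose_box:
  "packing (transpose_box B) I (\<lambda>i. transpose_box (P i)) \<longleftrightarrow> packing B I P"
  unfolding packing_def by auto

lemma containers_packed_transpose_box:
  "containers_packed (transpose_box B) m (\<lambda>k. transpose_box (C k)) \<longleftrightarrow> containers_packed B m C"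
  unfolding containers_packed_def by simp

lemma vertical_container_packing_transpose_box:
  "vertical_container_packing I (\<lambda>i. transpose_box (P i)) m (\<lambda>k. transpose_box (C k)) f
     (\<lambda>i. transpose_box (P' i)) \<longleftrightarrow> horizontal_container_packing I P m C f P'"
  unfolding vertical_container_packing_def horizontal_container_packing_def by auto

lemma packing_into_horizontal_containers:
  assumes "finite I" and "packing B I P"
    and "\<forall>i\<in>I. bh (P i) = 1 \<and> bw B \<le> d * bw (P i)"
    and "card ((\<lambda>i. bw (P i)) ` I) \<le> q"
  shows "\<exists>m C f P'. m \<le> d * (q + 1) ^ d \<and> containers_packed B m C \<and>
           horizontal_container_packing I P m C f P' \<and>
           (\<Sum>k<m. area (C k)) = (\<Sum>i\<in>I. area (P i))"
proof -
  obtain m C f P' where "m \<le> d * (q + 1) ^ d"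
    and "containers_packed (transpose_box B) m C"
    and "vertical_container_packing I (\<lambda>i. transpose_box (P i)) m C f P'"
    and "(\<Sum>k<m. area (C k)) = (\<Sum>i\<in>I. area (P i))"
    using packing_into_vertical_containers[of I "transpose_box B" "\<lambda>i. transpose_box (P i)" d q]
      assms by (auto simp: packing_transpose_box)
  then show ?thesis
    using containers_packed_transpose_box[of B m "\<lambda>k. transpose_box (C k)"]
      vertical_container_packing_transpose_box[of I P m "\<lambda>k. transpose_box (C k)" f
        "\<lambda>i. transpose_box (P' i)"]
    by (intro exI[of _ m] exI[of _ "\<lambda>k. transpose_box (C k)"] exI[of _ f]
        exI[of _ "\<lambda>i. transpose_box (P' i)"]) simp
qed

theorem lemma10:
  fixes q d :: nat
  assumes "0 < q" and "0 < d"
  shows "(\<forall>(B::box) (I::'i set) (P::'i \<Rightarrow> box).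
            finite I \<and> packing B I P \<and>
            (\<forall>i\<in>I. bw (P i) = 1 \<and> bh B \<le> d * bh (P i)) \<and>
            card ((\<lambda>i. bh (P i)) ` I) \<le> q \<longrightarrow>
            (\<exists>m C f P'. m \<le> d * (q + 1) ^ d \<and> containers_packed B m C \<and>
               vertical_container_packing I P m C f P' \<and>
               (\<Sum>k<m. area (C k)) = (\<Sum>i\<in>I. area (P i))))
       \<and> (\<forall>(B::box) (I::'i set) (P::'i \<Rightarrow> box).
            finite I \<and> packing B I P \<and>
            (\<forall>i\<in>I. bh (P i) = 1 \<and> bw B \<le> d * bw (P i)) \<and>
            card ((\<lambda>i. bw (P i)) ` I) \<le> q \<longrightarrow>
            (\<exists>m C f P'. m \<le> d * (q + 1) ^ d \<and> containers_packed B m C \<and>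
               horizontal_container_packing I P m C f P' \<and>
               (\<Sum>k<m. area (C k)) = (\<Sum>i\<in>I. area (P i))))"
  using packing_into_vertical_containers packing_into_horizontal_containers by blast

end
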